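(* Let $t\ge 1$ and let $\mathcal H$ be any 3-graph. Let $E_1$ be the set of pairs of vertices contained in at least one and at most $t$ hyperedges of $\mathcal H$, $E_2$ the set of pairs contained in at least $t+1$ and at most $2t$ hyperedges, and $E_3$ the set of pairs contained in at least $2t+1$ and at most $3t$ hyperedges. For $i=1,2,3$ let $\mathcal H_i$ be the set of hyperedges of $\mathcal H$ containing at least $i$ pairs from $E_i$, and let $\mathcal H_4$ be the set of hyperedges containing exactly one pair from $E_2$ and two pairs from $E_3$. Then $$|\mathcal H_1|+|\mathcal H_2|+|\mathcal H_3|+|\mathcal H_4|\le t\,(|E_1|+|E_2|+|E_3|).$$
   Context: A pair (2-subset) $e$ of vertices is said to be contained in a hyperedge $h$ if $e\subset h$. *)

theory Defs
  imports Main
begin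

definition three_graph :: "'a set set \<Rightarrow> bool" where
  "three_graph H \<longleftrightarrow> finite H \<and> (\<forall>h\<in>H. card h = 3)"

definition codeg :: "'a set set \<Rightarrow> 'a set \<Rightarrow> nat" where
  "codeg H e = card {h \<in> H. e \<subseteq> h}"

definition pairs_between :: "'a set set \<Rightarrow> nat \<Rightarrow> nat \<Rightarrow> 'a set set" where
  "pairs_between H lo hi = {e. card e = 2 \<and> lo \<le> codeg H e \<and> codeg H e \<le> hi}"

definition pairs_in :: "'a set set \<Rightarrow> 'a set \<Rightarrow> nat" where
  "pairs_in E h = card {e \<in> E. e \<subseteq> h}"

end

theory Submission
  imports Defs
begin

text \<open>Count incidences between pairs of \<open>E\<^sub>i\<close> and hyperedges. Since every pair of \<open>E\<^sub>i\<close>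
  lies in at most \<open>i t\<close> hyperedges, the hyperedges meet \<open>E\<^sub>i\<close> in at most \<open>i t |E\<^sub>i|\<close>
  incidences; on the other hand, the hyperedges of \<open>\<H>\<^sub>i\<close> contribute at least \<open>i\<close> each, and those
  of \<open>\<H>\<^sub>4\<close> contribute one to \<open>E\<^sub>2\<close> and two to \<open>E\<^sub>3\<close>. Dividing the \<open>i\<close>-th count by \<open>i\<close> and
  adding, \<open>\<H>\<^sub>4\<close> is counted with weight \<open>1/2 + 2/3 \<ge> 1\<close>.\<close>

lemma sum_pairs_in_eq_sum_codeg:
  assumes "finite H" "finite E"
  shows "(\<Sum>h\<in>H. pairs_in E h) = (\<Sum>e\<in>E. codeg H e)"
proof -
  have "(\<Sum>h\<in>H. pairs_in E h) = (\<Sum>h\<in>H. \<Sum>e\<in>E. if e \<subseteq> h then 1 else 0)"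
    unfolding pairs_in_def using assms by (simp add: sum.inter_filter[symmetric])
  also have "\<dots> = (\<Sum>e\<in>E. \<Sum>h\<in>H. if e \<subseteq> h then 1 else 0)"
    by (rule sum.swap)
  also have "\<dots> = (\<Sum>e\<in>E. codeg H e)"
    unfolding codeg_def using assms by (simp add: sum.inter_filter[symmetric])
  finally show ?thesis .
qed

lemma sum_pairs_in_le:
  assumes "finite H" "finite E" "\<And>e. e \<in> E \<Longrightarrow> codeg H e \<le> c"
  shows "(\<Sum>h\<in>H. pairs_in E h) \<le> c * card E"
proof -
  have "(\<Sum>h\<in>H. pairs_in E h) = (\<Sum>e\<in>E. codeg H e)"
    using assms(1,2) by (rule sum_pairs_in_eq_sum_codeg)
  also have "\<dots> \<le> (\<Sum>e\<in>E. c)"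
    using assms(3) by (rule sum_mono)
  finally show ?thesis by (simp add: mult.commute)
qed

lemma mult_card_le_sum:
  fixes f :: "'a \<Rightarrow> nat"
  assumes "finite H" "A \<subseteq> H" "\<And>x. x \<in> A \<Longrightarrow> a \<le> f x"
  shows "a * card A \<le> sum f H"
proof -
  have "a * card A \<le> sum f A"
    using sum_bounded_below[of A a f] assms(3) by (simp add: mult.commute)
  also have "\<dots> \<le> sum f H"
    using assms(1,2) by (rule sum_mono2) simp
  finally show ?thesis .
qed

lemma mult_card_add_mult_card_le_sum:
  fixes f :: "'a \<Rightarrow> nat"
  assumes "finite H" "A \<subseteq> H" "B \<subseteq> H" "A \<inter> B = {}"
    and "\<And>x. x \<in> A \<Longrightarrow> a \<le> f x" "\<And>x. x \<in> B \<Longrightarrow> b \<le> f x"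
  shows "a * card A + b * card B \<le> sum f H"
proof -
  have fin: "finite A" "finite B"
    using assms(1-3) finite_subset by blast+
  have "a * card A + b * card B \<le> sum f A + sum f B"
    using mult_card_le_sum[of A A a f] mult_card_le_sum[of B B b f] fin assms(5,6)
    by (simp add: add_mono)
  also have "\<dots> = sum f (A \<union> B)"
    using fin assms(4) by (simp add: sum.union_disjoint)
  also have "\<dots> \<le> sum f H"
    using assms(1-3) by (intro sum_mono2) auto
  finally show ?thesis .
qed

lemma finite_pairs_between:
  assumes "three_graph H" "lo \<ge> 1"
  shows "finite (pairs_between H lo hi)"
proof -
  have "finite (\<Union>H)"
    using assms(1) unfolding three_graph_def by (metis card.infinite finite_Union zero_neq_numeral)
  moreover have "pairs_between H lo hi \<subseteq> Pow (\<Union>H)"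
  proof
    fix e assume "e \<in> pairs_between H lo hi"
    then have "codeg H e \<noteq> 0"
      using assms(2) unfolding pairs_between_def by auto
    then have "{h\<in>H. e \<subseteq> h} \<noteq> {}"
      unfolding codeg_def by force
    then show "e \<in> Pow (\<Union>H)" by auto
  qed
  ultimately show ?thesis
    by (meson finite_Pow_iff finite_subset)
qed

lemma sum_pairs_in_pairs_between_le:
  assumes "three_graph H" "lo \<ge> 1"
  shows "(\<Sum>h\<in>H. pairs_in (pairs_between H lo hi) h) \<le> hi * card (pairs_between H lo hi)"
  using assms(1) unfolding three_graph_def
  by (intro sum_pairs_in_le finite_pairs_between assms) (auto simp: pairs_between_def)

theorem claim1:
  fixes H :: "'a set set" and t :: nat
  assumes "t \<ge> 1" and "three_graph H"
  defines "E1 \<equiv> pairs_between H 1 t"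
      and "E2 \<equiv> pairs_between H (t + 1) (2 * t)"
      and "E3 \<equiv> pairs_between H (2 * t + 1) (3 * t)"
  defines "H1 \<equiv> {h \<in> H. pairs_in E1 h \<ge> 1}"
      and "H2 \<equiv> {h \<in> H. pairs_in E2 h \<ge> 2}"
      and "H3 \<equiv> {h \<in> H. pairs_in E3 h \<ge> 3}"
      and "H4 \<equiv> {h \<in> H. pairs_in E2 h = 1 \<and> pairs_in E3 h = 2}"
  shows "card H1 + card H2 + card H3 + card H4 \<le> t * (card E1 + card E2 + card E3)"
proof -
  have fin: "finite H"
    using assms(2) unfolding three_graph_def by simp
  have "card H1 \<le> (\<Sum>h\<in>H. pairs_in E1 h)"
    using mult_card_le_sum[OF fin, of H1 1] by (auto simp: H1_def)
  also have "\<dots> \<le> t * card E1"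
    unfolding E1_def using assms(2) by (rule sum_pairs_in_pairs_between_le) simp
  finally have 1: "card H1 \<le> t * card E1" .
  have "2 * card H2 + 1 * card H4 \<le> (\<Sum>h\<in>H. pairs_in E2 h)"
    by (rule mult_card_add_mult_card_le_sum[OF fin]) (auto simp: H2_def H4_def)
  also have "\<dots> \<le> 2 * t * card E2"
    unfolding E2_def using assms(2) by (rule sum_pairs_in_pairs_between_le) simp
  finally have 2: "2 * card H2 + card H4 \<le> 2 * (t * card E2)" by simp
  have "3 * card H3 + 2 * card H4 \<le> (\<Sum>h\<in>H. pairs_in E3 h)"
    by (rule mult_card_add_mult_card_le_sum[OF fin]) (auto simp: H3_def H4_def)
  also have "\<dots> \<le> 3 * t * card E3"
    unfolding E3_def using assms(2) by (rule sum_pairs_in_pairs_between_le) simp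
  finally have 3: "3 * card H3 + 2 * card H4 \<le> 3 * (t * card E3)" by simp
  from 1 2 3 show ?thesis
    by (simp add: distrib_left)
qed

end
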